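(* Let $k\ge 1$ and $1\le m\le k$, and let $v_0,\pi_1,v_1,\dots,\pi_k$ be generated by Approximate Value Iteration with errors $\epsilon_1,\dots,\epsilon_{k-1}$ (for any choice of greedy policies). Let $\epsilon=\max_{1\le j<k}\operatorname{span}(\epsilon_j)$ (with $\epsilon=0$ if $k=1$). Let $\pi_{k,m}$ be the periodic non-stationary policy $\pi_k\,\pi_{k-1}\cdots\pi_{k-m+1}\,\pi_k\,\pi_{k-1}\cdots\pi_{k-m+1}\cdots$. Then $$\|v_*-v_{\pi_{k,m}}\|_\infty \le \frac{1}{1-\gamma^m}\left(\frac{\gamma-\gamma^k}{1-\gamma}\,\epsilon+\gamma^k\operatorname{span}(v_*-v_0)\right).$$
   Context: A Markov Decision Process with finite state space $S$, finite action space $A$, reward function $r(s,a)$, transition probabilities $p(s'|s,a)$ and discount factor $\gamma\in[0,1)$. For a (deterministic, stationary) policy $\pi:S\to A$, let $r_\pi(s)=r(s,\pi(s))$, let $P_\pi$ be the stochastic matrix $P_\pi(s,s')=p(s'|s,\pi(s))$, and let $T_\pi v=r_\pi+\gamma P_\pi v$ be the Bellman operator of $\pi$; $v_\pi$ is its unique fixed point (the expected $\gamma$-discounted total reward of $\pi$). The Bellman optimality operator is $Tv=\max_\pi T_\pi v$ (componentwise), $v_*$ is its fixed point (the optimal value), and a policy $\pi$ is greedy with respect to $v$ if $T_\pi v=Tv$. For a function $f:S\to\mathbb R$, $\operatorname{span}(f)=\max_s f(s)-\min_s f(s)$. Approximate Value Iteration: starting from an arbitrary $v_0:S\to\mathbb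 R$, for $j\ge 0$ pick any policy $\pi_{j+1}$ greedy with respect to $v_j$ and set $v_{j+1}=T_{\pi_{j+1}}v_j+\epsilon_{j+1}$, where $\epsilon_{j+1}:S\to\mathbb R$ are arbitrary error terms. A non-stationary policy $\sigma_0\sigma_1\sigma_2\cdots$ uses policy $\sigma_t$ at time $t$; its value is the expected $\gamma$-discounted total reward $v=\sum_{t\ge0}\gamma^t P_{\sigma_0}\cdots P_{\sigma_{t-1}} r_{\sigma_t}$. For the periodic policy $\pi_{k,m}$ this value satisfies $v_{\pi_{k,m}}=T_{\pi_k}T_{\pi_{k-1}}\cdots T_{\pi_{k-m+1}}v_{\pi_{k,m}}$. *)

theory Defs
  imports "HOL-Analysis.Analysis"
begin

definition is_mdp :: "('s::finite \<Rightarrow> 'a::finite \<Rightarrow> 's \<Rightarrow> real) \<Rightarrow> real \<Rightarrow> bool" where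
  "is_mdp p g \<longleftrightarrow> (\<forall>s a s'. 0 \<le> p s a s') \<and> (\<forall>s a. (\<Sum>s'\<in>UNIV. p s a s') = 1)
     \<and> 0 \<le> g \<and> g < 1"

definition T_pol :: "('s::finite \<Rightarrow> 'a \<Rightarrow> real) \<Rightarrow> ('s \<Rightarrow> 'a \<Rightarrow> 's \<Rightarrow> real) \<Rightarrow> real
    \<Rightarrow> ('s \<Rightarrow> 'a) \<Rightarrow> ('s \<Rightarrow> real) \<Rightarrow> 's \<Rightarrow> real" where
  "T_pol r p g pol v s = r s (pol s) + g * (\<Sum>s'\<in>UNIV. p s (pol s) s' * v s')"

definition T_opt :: "('s::finite \<Rightarrow> 'a::finite \<Rightarrow> real) \<Rightarrow> ('s \<Rightarrow> 'a \<Rightarrow> 's \<Rightarrow> real) \<Rightarrow> real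
    \<Rightarrow> ('s \<Rightarrow> real) \<Rightarrow> 's \<Rightarrow> real" where
  "T_opt r p g v s = Max {T_pol r p g pol v s | pol. True}"

definition greedy :: "('s::finite \<Rightarrow> 'a::finite \<Rightarrow> real) \<Rightarrow> ('s \<Rightarrow> 'a \<Rightarrow> 's \<Rightarrow> real) \<Rightarrow> real
    \<Rightarrow> ('s \<Rightarrow> 'a) \<Rightarrow> ('s \<Rightarrow> real) \<Rightarrow> bool" where
  "greedy r p g pol v \<longleftrightarrow> T_pol r p g pol v = T_opt r p g v"

text \<open>Product P_{sg 0} ... P_{sg (t-1)} of transition matrices.\<close>
fun prodP :: "('s::finite \<Rightarrow> 'a \<Rightarrow> 's \<Rightarrow> real) \<Rightarrow> (nat \<Rightarrow> 's \<Rightarrow> 'a) \<Rightarrow> nat \<Rightarrow> 's \<Rightarrow> 's \<Rightarrow> real" where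
  "prodP p sg 0 s s' = (if s = s' then 1 else 0)"
| "prodP p sg (Suc t) s s'' = (\<Sum>s'\<in>UNIV. prodP p sg t s s' * p s' (sg t s') s'')"

definition value_ns :: "('s::finite \<Rightarrow> 'a \<Rightarrow> real) \<Rightarrow> ('s \<Rightarrow> 'a \<Rightarrow> 's \<Rightarrow> real) \<Rightarrow> real
    \<Rightarrow> (nat \<Rightarrow> 's \<Rightarrow> 'a) \<Rightarrow> 's \<Rightarrow> real" where
  "value_ns r p g sg s = (\<Sum>t. g ^ t * (\<Sum>s'\<in>UNIV. prodP p sg t s s' * r s' (sg t s')))"

definition span :: "('s::finite \<Rightarrow> real) \<Rightarrow> real" where
  "span f = Max (range f) - Min (range f)"

definition supnorm :: "('s::finite \<Rightarrow> real) \<Rightarrow> real" where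
  "supnorm f = Max (range (\<lambda>s. \<bar>f s\<bar>))"

definition periodic_pol :: "(nat \<Rightarrow> 's \<Rightarrow> 'a) \<Rightarrow> nat \<Rightarrow> nat \<Rightarrow> nat \<Rightarrow> 's \<Rightarrow> 'a" where
  "periodic_pol pol k m t = pol (k - t mod m)"

end

theory Submission
  imports Defs
begin

(* Write w_j for the AVI iterates, completed by the error-free last step
   w_k = T_{pi_k} w_{k-1}, and e_j = w_j - T_{pi_j} w_{j-1} for the errors.
   1. Greediness gives max (V - w_j) <= g max (V - w_{j-1}) - min e_j, and for
      any z_j with T_{pi_j} z_{j-1} <= z_j one gets
      min (z_j - w_j) >= g min (z_{j-1} - w_{j-1}) - max e_j.  Choosing z_j = V
      up to index k-m and z_j = T_{pi_j} z_{j-1} afterwards makes z_k = C V,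
      where C = T_{pi_k} ... T_{pi_{k-m+1}}.  Subtracting the two bounds yields
      V - C V <= g^k span (V - v_0) + sum_j g^(k-j) span e_j.
   2. The value of the periodic policy is the fixed point of C (n-step Bellman
      equation for non-stationary policies), C contracts max/min of differences
      by g^m, and C V <= V.  Hence 0 <= V - v_pi <= (V - C V) / (1 - g^m). *)

abbreviation vmax :: "('s::finite \<Rightarrow> real) \<Rightarrow> real" where
  "vmax f \<equiv> Max (range f)"

abbreviation vmin :: "('s::finite \<Rightarrow> real) \<Rightarrow> real" where
  "vmin f \<equiv> Min (range f)"

lemma vmax_ge: "f s \<le> vmax f"
  by simp

lemma vmax_leI: "(\<And>s. f s \<le> c) \<Longrightarrow> vmax f \<le> c"
  by (simp add: Max_le_iff)

lemma vmin_le: "vmin f \<le> f s"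
  by simp

lemma vmin_geI: "(\<And>s. c \<le> f s) \<Longrightarrow> c \<le> vmin f"
  by (simp add: Min_ge_iff)

lemma convex_comb_le_vmax:
  assumes "\<And>s'. 0 \<le> q s'" "(\<Sum>s'\<in>UNIV. q s') = 1"
  shows "(\<Sum>s'\<in>UNIV. q s' * f s') \<le> vmax (f :: 's::finite \<Rightarrow> real)"
proof -
  have "(\<Sum>s'\<in>UNIV. q s' * f s') \<le> (\<Sum>s'\<in>UNIV. q s' * vmax f)"
    by (rule sum_mono) (simp add: assms(1) mult_left_mono)
  also have "\<dots> = vmax f"
    by (simp add: sum_distrib_right[symmetric] assms(2))
  finally show ?thesis .
qed

lemma convex_comb_ge_vmin:
  assumes "\<And>s'. 0 \<le> q s'" "(\<Sum>s'\<in>UNIV. q s') = 1"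
  shows "vmin (f :: 's::finite \<Rightarrow> real) \<le> (\<Sum>s'\<in>UNIV. q s' * f s')"
proof -
  have "vmin f = (\<Sum>s'\<in>UNIV. q s' * vmin f)"
    by (simp add: sum_distrib_right[symmetric] assms(2))
  also have "\<dots> \<le> (\<Sum>s'\<in>UNIV. q s' * f s')"
    by (rule sum_mono) (simp add: assms(1) mult_left_mono)
  finally show ?thesis .
qed

lemma sum_delta_mult: "(\<Sum>s'\<in>(UNIV::'s::finite set). (if s = s' then 1 else 0) * f s') = (f s :: real)"
proof -
  have "(\<Sum>s'\<in>(UNIV::'s set). (if s = s' then 1 else 0) * f s') = (\<Sum>s'\<in>UNIV. if s' = s then f s' else 0)"
    by (rule sum.cong) auto
  then show ?thesis by simp
qed

lemma sum_mult_delta: "(\<Sum>s'\<in>(UNIV::'s::finite set). f s' * (if s' = s then 1 else 0)) = (f s :: real)"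
proof -
  have "(\<Sum>s'\<in>(UNIV::'s set). f s' * (if s' = s then 1 else 0)) = (\<Sum>s'\<in>UNIV. if s' = s then f s' else 0)"
    by (rule sum.cong) auto
  then show ?thesis by simp
qed

lemma prodP_nonneg: "is_mdp p g \<Longrightarrow> 0 \<le> prodP p sg t s s'"
  by (induction t arbitrary: s') (auto simp: is_mdp_def intro!: sum_nonneg)

lemma prodP_sum: "is_mdp p g \<Longrightarrow> (\<Sum>s'\<in>UNIV. prodP p sg t s s') = 1"
proof (induction t)
  case (Suc t)
  have "(\<Sum>s''\<in>UNIV. prodP p sg (Suc t) s s'')
      = (\<Sum>s'\<in>UNIV. \<Sum>s''\<in>UNIV. prodP p sg t s s' * p s' (sg t s') s'')"
    by (simp only: prodP.simps(2)) (rule sum.swap)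
  also have "\<dots> = (\<Sum>s'\<in>UNIV. prodP p sg t s s' * (\<Sum>s''\<in>UNIV. p s' (sg t s') s''))"
    by (simp add: sum_distrib_left)
  also have "\<dots> = 1"
    using Suc by (simp add: is_mdp_def)
  finally show ?case .
qed simp

lemma prodP_first_step:
  "prodP p sg (Suc t) s s'' = (\<Sum>s'\<in>UNIV. p s (sg 0 s) s' * prodP p (\<lambda>t. sg (Suc t)) t s' s'')"
proof (induction t arbitrary: s'')
  case 0
  show ?case by (simp add: sum_delta_mult sum_mult_delta)
next
  case (Suc t)
  have "prodP p sg (Suc (Suc t)) s s'' = (\<Sum>s'\<in>UNIV. prodP p sg (Suc t) s s' * p s' (sg (Suc t) s') s'')"
    by (simp only: prodP.simps(2))
  also have "\<dots> = (\<Sum>s'\<in>UNIV. \<Sum>x\<in>UNIV. p s (sg 0 s) x * prodP p (\<lambda>t. sg (Suc t)) t x s' * p s' (sg (Suc t) s') s'')"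
    by (simp only: Suc sum_distrib_right)
  also have "\<dots> = (\<Sum>x\<in>UNIV. p s (sg 0 s) x * prodP p (\<lambda>t. sg (Suc t)) (Suc t) x s'')"
    by (subst sum.swap) (simp add: sum_distrib_left mult.assoc)
  finally show ?case .
qed

definition reward_at :: "('s::finite \<Rightarrow> 'a \<Rightarrow> real) \<Rightarrow> ('s \<Rightarrow> 'a \<Rightarrow> 's \<Rightarrow> real) \<Rightarrow> real
    \<Rightarrow> (nat \<Rightarrow> 's \<Rightarrow> 'a) \<Rightarrow> 's \<Rightarrow> nat \<Rightarrow> real" where
  "reward_at r p g sg s t = g ^ t * (\<Sum>s'\<in>UNIV. prodP p sg t s s' * r s' (sg t s'))"

lemma value_ns_reward_at: "value_ns r p g sg s = (\<Sum>t. reward_at r p g sg s t)"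
  by (simp add: value_ns_def reward_at_def)

text \<open>Rewards are bounded and the discount is below 1, so the series converges.\<close>

lemma reward_at_summable:
  assumes mdp: "is_mdp p g"
  shows "summable (reward_at r p g sg s)"
proof -
  define R where "R = Max (range (\<lambda>(s, a). \<bar>r s a\<bar>))"
  have rR: "\<bar>r s a\<bar> \<le> R" for s a
    unfolding R_def by (rule Max_ge) (auto intro: range_eqI[where x="(s, a)"])
  have g: "0 \<le> g" "g < 1"
    using mdp by (auto simp: is_mdp_def)
  have bound: "norm (reward_at r p g sg s t) \<le> R * g ^ t" for t
  proof -
    have "\<bar>\<Sum>s'\<in>UNIV. prodP p sg t s s' * r s' (sg t s')\<bar> \<le> (\<Sum>s'\<in>UNIV. prodP p sg t s s' * R)"
      by (rule order_trans[OF sum_abs])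
        (auto intro!: sum_mono simp: abs_mult prodP_nonneg[OF mdp] mult_left_mono rR)
    also have "\<dots> = R"
      by (simp add: sum_distrib_right[symmetric] prodP_sum[OF mdp])
    finally have "g ^ t * \<bar>\<Sum>s'\<in>UNIV. prodP p sg t s s' * r s' (sg t s')\<bar> \<le> g ^ t * R"
      using g by (simp add: mult_left_mono)
    then show ?thesis
      using g by (simp add: reward_at_def abs_mult mult.commute)
  qed
  have "summable (\<lambda>t. R * g ^ t)"
    using g by (intro summable_mult summable_geometric) simp
  then show ?thesis
    by (rule summable_comparison_test') (rule bound)
qed

lemma value_ns_step:
  assumes mdp: "is_mdp p g"
  shows "value_ns r p g sg = T_pol r p g (sg 0) (value_ns r p g (\<lambda>t. sg (Suc t)))"
proof
  fix s
  let ?sg' = "\<lambda>t. sg (Suc t)"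
  let ?q = "p s (sg 0 s)"
  have shift: "reward_at r p g sg s (Suc t) = g * (\<Sum>s'\<in>UNIV. ?q s' * reward_at r p g ?sg' s' t)" for t
  proof -
    have "reward_at r p g sg s (Suc t)
        = g ^ Suc t * (\<Sum>s''\<in>UNIV. \<Sum>s'\<in>UNIV. ?q s' * (prodP p ?sg' t s' s'' * r s'' (?sg' t s'')))"
      by (simp add: reward_at_def prodP_first_step sum_distrib_right mult.assoc del: prodP.simps)
    also have "\<dots> = g * (\<Sum>s'\<in>UNIV. ?q s' * reward_at r p g ?sg' s' t)"
      by (subst sum.swap) (simp add: reward_at_def sum_distrib_left mult_ac)
    finally show ?thesis .
  qed
  have summ: "summable (\<lambda>t. ?q s' * reward_at r p g ?sg' s' t)" for s'
    using summable_mult[OF reward_at_summable[OF mdp]] .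
  have "value_ns r p g sg s = reward_at r p g sg s 0 + (\<Sum>t. reward_at r p g sg s (Suc t))"
    using suminf_split_head[OF reward_at_summable[OF mdp]] by (simp add: value_ns_reward_at)
  also have "reward_at r p g sg s 0 = r s (sg 0 s)"
    by (simp add: reward_at_def sum_delta_mult)
  also have "(\<Sum>t. reward_at r p g sg s (Suc t)) = (\<Sum>t. g * (\<Sum>s'\<in>UNIV. ?q s' * reward_at r p g ?sg' s' t))"
    by (simp only: shift)
  also have "\<dots> = g * (\<Sum>t. \<Sum>s'\<in>UNIV. ?q s' * reward_at r p g ?sg' s' t)"
    by (rule suminf_mult) (rule summable_sum[OF summ])
  also have "(\<Sum>t. \<Sum>s'\<in>UNIV. ?q s' * reward_at r p g ?sg' s' t) = (\<Sum>s'\<in>UNIV. \<Sum>t. ?q s' * reward_at r p g ?sg' s' t)"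
    by (rule suminf_sum) (rule summ)
  also have "\<dots> = (\<Sum>s'\<in>UNIV. ?q s' * value_ns r p g ?sg' s')"
    by (simp add: value_ns_reward_at suminf_mult reward_at_summable[OF mdp])
  finally show "value_ns r p g sg s = T_pol r p g (sg 0) (value_ns r p g ?sg') s"
    by (simp add: T_pol_def)
qed

fun Tseq :: "('s::finite \<Rightarrow> 'a \<Rightarrow> real) \<Rightarrow> ('s \<Rightarrow> 'a \<Rightarrow> 's \<Rightarrow> real) \<Rightarrow> real
    \<Rightarrow> (nat \<Rightarrow> 's \<Rightarrow> 'a) \<Rightarrow> nat \<Rightarrow> ('s \<Rightarrow> real) \<Rightarrow> 's \<Rightarrow> real" where
  "Tseq r p g sg 0 u = u"
| "Tseq r p g sg (Suc n) u = T_pol r p g (sg 0) (Tseq r p g (\<lambda>t. sg (Suc t)) n u)"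

lemma Tseq_cong: "(\<And>t. t < n \<Longrightarrow> sg t = sg' t) \<Longrightarrow> Tseq r p g sg n u = Tseq r p g sg' n u"
proof (induction n arbitrary: sg sg')
  case (Suc n)
  have "Tseq r p g (\<lambda>t. sg (Suc t)) n u = Tseq r p g (\<lambda>t. sg' (Suc t)) n u"
    by (rule Suc.IH) (simp add: Suc.prems)
  moreover have "sg 0 = sg' 0"
    by (simp add: Suc.prems)
  ultimately show ?case
    by simp
qed simp

lemma value_ns_Tseq:
  assumes mdp: "is_mdp p g"
  shows "value_ns r p g sg = Tseq r p g sg n (value_ns r p g (\<lambda>t. sg (t + n)))"
proof (induction n arbitrary: sg)
  case (Suc n)
  show ?case
    using value_ns_step[OF mdp, of r sg] Suc[of "\<lambda>t. sg (Suc t)"] by simp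
qed simp

text \<open>T_pol is an affine operator whose linear part is g times a stochastic matrix, so it
  shrinks the maximum and the minimum of a difference by the factor g.\<close>

lemma T_pol_diff: "T_pol r p g q u s - T_pol r p g q u' s = g * (\<Sum>s'\<in>UNIV. p s (q s) s' * (u s' - u' s'))"
  by (simp add: T_pol_def right_diff_distrib sum_subtractf)

lemma T_pol_diff_le:
  assumes mdp: "is_mdp p g"
  shows "T_pol r p g q u s - T_pol r p g q u' s \<le> g * vmax (\<lambda>s. u s - u' s)"
  unfolding T_pol_diff using mdp
  by (intro mult_left_mono convex_comb_le_vmax) (auto simp: is_mdp_def)

lemma T_pol_diff_ge:
  assumes mdp: "is_mdp p g"
  shows "g * vmin (\<lambda>s. u s - u' s) \<le> T_pol r p g q u s - T_pol r p g q u' s"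
  unfolding T_pol_diff using mdp
  by (intro mult_left_mono convex_comb_ge_vmin) (auto simp: is_mdp_def)

lemma T_pol_mono:
  assumes mdp: "is_mdp p g" and le: "\<And>s. u' s \<le> u s"
  shows "T_pol r p g q u' s \<le> T_pol r p g q u s"
proof -
  have "0 \<le> vmin (\<lambda>s. u s - u' s)"
    by (rule vmin_geI) (simp add: le)
  then have "0 \<le> g * vmin (\<lambda>s. u s - u' s)"
    using mdp by (simp add: is_mdp_def)
  then show ?thesis
    using T_pol_diff_ge[OF mdp, of u u' r q s] by linarith
qed

lemma Tseq_diff_le:
  assumes mdp: "is_mdp p g"
  shows "Tseq r p g sg n u s - Tseq r p g sg n u' s \<le> g ^ n * vmax (\<lambda>s. u s - u' s)"
proof (induction n arbitrary: sg s)
  case (Suc n)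
  let ?d = "\<lambda>s. Tseq r p g (\<lambda>t. sg (Suc t)) n u s - Tseq r p g (\<lambda>t. sg (Suc t)) n u' s"
  have "vmax ?d \<le> g ^ n * vmax (\<lambda>s. u s - u' s)"
    by (rule vmax_leI) (rule Suc.IH)
  then have "g * vmax ?d \<le> g * (g ^ n * vmax (\<lambda>s. u s - u' s))"
    using mdp by (simp add: is_mdp_def mult_left_mono)
  then show ?case
    using T_pol_diff_le[OF mdp, where r=r and q="sg 0"] by (simp add: mult.assoc) (meson order_trans)
qed simp

lemma Tseq_diff_ge:
  assumes mdp: "is_mdp p g"
  shows "g ^ n * vmin (\<lambda>s. u s - u' s) \<le> Tseq r p g sg n u s - Tseq r p g sg n u' s"
proof (induction n arbitrary: sg s)
  case (Suc n)
  let ?d = "\<lambda>s. Tseq r p g (\<lambda>t. sg (Suc t)) n u s - Tseq r p g (\<lambda>t. sg (Suc t)) n u' s"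
  have "g ^ n * vmin (\<lambda>s. u s - u' s) \<le> vmin ?d"
    by (rule vmin_geI) (rule Suc.IH)
  then have "g * (g ^ n * vmin (\<lambda>s. u s - u' s)) \<le> g * vmin ?d"
    using mdp by (simp add: is_mdp_def mult_left_mono)
  then show ?case
    using T_pol_diff_ge[OF mdp, where r=r and q="sg 0"] by (simp add: mult.assoc) (meson order_trans)
qed simp

lemma T_opt_Max: "T_opt r p g u s = Max (range (\<lambda>q. T_pol r p g q u (s::'s::finite)))"
  unfolding T_opt_def by (rule arg_cong[where f=Max]) auto

lemma T_opt_ge: "T_pol r p g q u s \<le> T_opt r p g u (s::'s::finite)"
  unfolding T_opt_Max by (rule Max_ge) auto

lemma T_opt_attained: "\<exists>q. T_opt r p g u (s::'s::finite) = T_pol r p g (q::'s \<Rightarrow> 'a::finite) u s"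
proof -
  have "T_opt r p g u s \<in> range (\<lambda>q::'s \<Rightarrow> 'a. T_pol r p g q u s)"
    unfolding T_opt_Max by (rule Max_in) auto
  then show ?thesis
    by auto
qed

lemma T_opt_diff_le:
  assumes mdp: "is_mdp p g"
  shows "T_opt r p g u s - T_opt r p g u' s \<le> g * vmax (\<lambda>s. u s - u' s)"
proof -
  obtain q where q: "T_opt r p g u s = T_pol r p g q u s"
    using T_opt_attained by blast
  show ?thesis
    using q T_opt_ge[of r p g q u' s] T_pol_diff_le[OF mdp, of r q u s u'] by linarith
qed

lemma Tseq_le_optimal:
  assumes mdp: "is_mdp p g" and vstar: "T_opt r p g vstar = vstar"
  shows "Tseq r p g sg n vstar s \<le> vstar s"
proof (induction n arbitrary: sg s)
  case (Suc n)
  have "T_pol r p g (sg 0) (Tseq r p g (\<lambda>t. sg (Suc t)) n vstar) s \<le> T_pol r p g (sg 0) vstar s"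
    by (rule T_pol_mono[OF mdp]) (rule Suc.IH)
  also have "\<dots> \<le> vstar s"
    using T_opt_ge[of r p g "sg 0" vstar s] vstar by simp
  finally show ?case
    by simp
qed simp

text \<open>Discounted accumulation of per-step errors, disc_sum g f n = sum_{i=1..n} g^(n-i) f_i;
  this is how errors made at steps 1..n add up after n contractions.\<close>

definition disc_sum :: "real \<Rightarrow> (nat \<Rightarrow> real) \<Rightarrow> nat \<Rightarrow> real" where
  "disc_sum g f n = (\<Sum>i=1..n. g ^ (n - i) * f i)"

lemma disc_sum_0 [simp]: "disc_sum g f 0 = 0"
  by (simp add: disc_sum_def)

lemma disc_sum_Suc [simp]: "disc_sum g f (Suc n) = g * disc_sum g f n + f (Suc n)"
proof -
  have "(\<Sum>i=1..n. g ^ (Suc n - i) * f i) = g * (\<Sum>i=1..n. g ^ (n - i) * f i)"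
    unfolding sum_distrib_left by (rule sum.cong) (auto simp: Suc_diff_le)
  then show ?thesis
    by (simp add: disc_sum_def)
qed

lemma disc_sum_diff: "disc_sum g f n - disc_sum g h n = disc_sum g (\<lambda>i. f i - h i) n"
  by (induction n) (simp_all add: algebra_simps)

lemma disc_sum_le_geometric:
  assumes g: "0 \<le> g" "g < 1" and n: "1 \<le> n" and last: "f n = 0"
    and bounded: "\<And>i. 1 \<le> i \<Longrightarrow> i < n \<Longrightarrow> f i \<le> E"
  shows "disc_sum g f n \<le> (g - g ^ n) / (1 - g) * E"
proof -
  have partial: "disc_sum g f j * (1 - g) \<le> E * (1 - g ^ j)" if "j < n" for j
    using that
  proof (induction j)
    case (Suc j)
    have "g * (disc_sum g f j * (1 - g)) \<le> g * (E * (1 - g ^ j))"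
      using Suc g by (simp add: mult_left_mono)
    moreover have "f (Suc j) * (1 - g) \<le> E * (1 - g)"
      using bounded[of "Suc j"] Suc.prems g by (simp add: mult_right_mono)
    ultimately show ?case
      by (simp add: algebra_simps)
  qed simp
  obtain j where j: "n = Suc j"
    using n by (cases n) auto
  have "disc_sum g f n * (1 - g) = g * (disc_sum g f j * (1 - g))"
    using j last by simp
  also have "\<dots> \<le> g * (E * (1 - g ^ j))"
    using partial[of j] j g by (simp add: mult_left_mono)
  also have "\<dots> = E * (g - g ^ n)"
    using j by (simp add: algebra_simps)
  finally show ?thesis
    using g by (simp add: pos_le_divide_eq mult.commute)
qed

text \<open>Upper bound for AVI (w_{j+1} = T_{q_{j+1}} w_j + e_{j+1} with q_{j+1} greedy for w_j):
  greediness turns each step into the optimality operator, which contracts max (V - w_j).\<close>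

lemma avi_loss_upper:
  assumes mdp: "is_mdp p g" and vstar: "T_opt r p g vstar = vstar"
    and greedy: "\<And>j. j < n \<Longrightarrow> greedy r p g (q (Suc j)) (w j)"
    and step: "\<And>j. j < n \<Longrightarrow> w (Suc j) = (\<lambda>s. T_pol r p g (q (Suc j)) (w j) s + e (Suc j) s)"
  shows "vmax (\<lambda>s. vstar s - w n s)
    \<le> g ^ n * vmax (\<lambda>s. vstar s - w 0 s) - disc_sum g (\<lambda>i. vmin (e i)) n"
  using greedy step
proof (induction n)
  case (Suc n)
  have IH: "vmax (\<lambda>s. vstar s - w n s) \<le> g ^ n * vmax (\<lambda>s. vstar s - w 0 s) - disc_sum g (\<lambda>i. vmin (e i)) n"
    by (rule Suc.IH) (simp_all add: Suc.prems)
  have "vmax (\<lambda>s. vstar s - w (Suc n) s) \<le> g * vmax (\<lambda>s. vstar s - w n s) - vmin (e (Suc n))"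
  proof (rule vmax_leI)
    fix s
    have "w (Suc n) s = T_opt r p g (w n) s + e (Suc n) s"
      using Suc.prems(1)[of n] Suc.prems(2)[of n] by (simp add: greedy_def)
    then have "vstar s - w (Suc n) s = T_opt r p g vstar s - T_opt r p g (w n) s - e (Suc n) s"
      using vstar by simp
    then show "vstar s - w (Suc n) s \<le> g * vmax (\<lambda>s. vstar s - w n s) - vmin (e (Suc n))"
      using T_opt_diff_le[OF mdp, of r vstar s "w n"] vmin_le[of "e (Suc n)" s] by linarith
  qed
  also have "\<dots> \<le> g * (g ^ n * vmax (\<lambda>s. vstar s - w 0 s) - disc_sum g (\<lambda>i. vmin (e i)) n) - vmin (e (Suc n))"
    using IH mdp by (simp add: is_mdp_def mult_left_mono)
  also have "\<dots> = g ^ Suc n * vmax (\<lambda>s. vstar s - w 0 s) - disc_sum g (\<lambda>i. vmin (e i)) (Suc n)"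
    by (simp add: algebra_simps)
  finally show ?case .
qed simp

lemma avi_loss_lower:
  assumes mdp: "is_mdp p g"
    and super: "\<And>j s. j < n \<Longrightarrow> T_pol r p g (q (Suc j)) (z j) s \<le> z (Suc j) s"
    and step: "\<And>j. j < n \<Longrightarrow> w (Suc j) = (\<lambda>s. T_pol r p g (q (Suc j)) (w j) s + e (Suc j) s)"
  shows "g ^ n * vmin (\<lambda>s. z 0 s - w 0 s) - disc_sum g (\<lambda>i. vmax (e i)) n
    \<le> vmin (\<lambda>s. z n s - w n s)"
  using super step
proof (induction n)
  case (Suc n)
  have IH: "g ^ n * vmin (\<lambda>s. z 0 s - w 0 s) - disc_sum g (\<lambda>i. vmax (e i)) n \<le> vmin (\<lambda>s. z n s - w n s)"
    by (rule Suc.IH) (simp_all add: Suc.prems)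
  have "g ^ Suc n * vmin (\<lambda>s. z 0 s - w 0 s) - disc_sum g (\<lambda>i. vmax (e i)) (Suc n)
      = g * (g ^ n * vmin (\<lambda>s. z 0 s - w 0 s) - disc_sum g (\<lambda>i. vmax (e i)) n) - vmax (e (Suc n))"
    by (simp add: algebra_simps)
  also have "\<dots> \<le> g * vmin (\<lambda>s. z n s - w n s) - vmax (e (Suc n))"
    using IH mdp by (simp add: is_mdp_def mult_left_mono)
  also have "\<dots> \<le> vmin (\<lambda>s. z (Suc n) s - w (Suc n) s)"
  proof (rule vmin_geI)
    fix s
    have "w (Suc n) s = T_pol r p g (q (Suc n)) (w n) s + e (Suc n) s"
      using Suc.prems(2)[of n] by simp
    then show "g * vmin (\<lambda>s. z n s - w n s) - vmax (e (Suc n)) \<le> z (Suc n) s - w (Suc n) s"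
      using Suc.prems(1)[of n s] T_pol_diff_ge[OF mdp, of "z n" "w n" r "q (Suc n)" s]
        vmax_ge[of "e (Suc n)" s] by linarith
  qed
  finally show ?case .
qed simp

lemma avi_gap_bound:
  assumes mdp: "is_mdp p g" and vstar: "T_opt r p g vstar = vstar"
    and greedy: "\<And>j. j < n \<Longrightarrow> greedy r p g (q (Suc j)) (w j)"
    and step: "\<And>j. j < n \<Longrightarrow> w (Suc j) = (\<lambda>s. T_pol r p g (q (Suc j)) (w j) s + e (Suc j) s)"
    and super: "\<And>j s. j < n \<Longrightarrow> T_pol r p g (q (Suc j)) (z j) s \<le> z (Suc j) s"
    and z0: "z 0 = vstar"
  shows "vstar s - z n s \<le> g ^ n * span (\<lambda>s. vstar s - w 0 s) + disc_sum g (\<lambda>i. span (e i)) n"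
proof -
  have "vstar s - z n s = (vstar s - w n s) - (z n s - w n s)"
    by simp
  also have "\<dots> \<le> vmax (\<lambda>s. vstar s - w n s) - vmin (\<lambda>s. z n s - w n s)"
    by (intro diff_mono vmax_ge vmin_le)
  also have "\<dots> \<le> (g ^ n * vmax (\<lambda>s. vstar s - w 0 s) - disc_sum g (\<lambda>i. vmin (e i)) n)
      - (g ^ n * vmin (\<lambda>s. vstar s - w 0 s) - disc_sum g (\<lambda>i. vmax (e i)) n)"
    using avi_loss_upper[where q=q and w=w and e=e and n=n, OF mdp vstar greedy step]
      avi_loss_lower[where q=q and w=w and e=e and z=z and n=n, OF mdp super step] z0
    by (simp add: diff_mono)
  also have "\<dots> = g ^ n * span (\<lambda>s. vstar s - w 0 s) + disc_sum g (\<lambda>i. span (e i)) n"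
    using disc_sum_diff[of g "\<lambda>i. vmax (e i)" n "\<lambda>i. vmin (e i)"]
    by (simp add: span_def algebra_simps)
  finally show ?thesis .
qed

text \<open>Comparison sequence for the periodic policy: z_j = V for j <= l and
  z_j = T_{pol j} z_{j-1} for j > l, written as z_j = Tseq (pol j, pol (j-1), ...) (j - l) V.
  It satisfies the hypothesis of avi_loss_lower, since T_pol V <= T_opt V = V.\<close>

lemma Tseq_tail_super:
  assumes mdp: "is_mdp p g" and vstar: "T_opt r p g vstar = vstar"
  shows "T_pol r p g (pol (Suc j)) (Tseq r p g (\<lambda>t. pol (j - t)) (j - l) vstar) s
    \<le> Tseq r p g (\<lambda>t. pol (Suc j - t)) (Suc j - l) vstar s"
proof (cases "Suc j \<le> l")
  case True
  then show ?thesis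
    using T_opt_ge[of r p g "pol (Suc j)" vstar s] vstar by simp
next
  case False
  then have "Suc j - l = Suc (j - l)"
    by simp
  then show ?thesis
    by simp
qed

lemma periodic_value_fixed:
  assumes mdp: "is_mdp p g"
  shows "Tseq r p g (periodic_pol pol k m) m (value_ns r p g (periodic_pol pol k m))
    = value_ns r p g (periodic_pol pol k m)"
proof -
  have "(\<lambda>t. periodic_pol pol k m (t + m)) = periodic_pol pol k m"
    by (rule ext) (simp add: periodic_pol_def)
  then show ?thesis
    using value_ns_Tseq[OF mdp, of r "periodic_pol pol k m" m] by simp
qed

text \<open>Loss of a fixed point of an m-step operator C: V - v_pi splits into the residual
  V - C V, which lies in [0, B], and C V - C v_pi, which is within g^m of V - v_pi.\<close>

lemma fixed_point_loss_bound:
  assumes mdp: "is_mdp p g" and vstar: "T_opt r p g vstar = vstar"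
    and fixed: "Tseq r p g sg m vp = vp" and gm: "g ^ m < 1"
    and residual: "\<And>s. vstar s - Tseq r p g sg m vstar s \<le> B"
  shows "supnorm (\<lambda>s. vstar s - vp s) \<le> B / (1 - g ^ m)"
proof -
  define x where "x = (\<lambda>s. vstar s - vp s)"
  have split: "x s = (vstar s - Tseq r p g sg m vstar s) + (Tseq r p g sg m vstar s - Tseq r p g sg m vp s)" for s
    using fixed by (simp add: x_def)
  have "vmax x \<le> B + g ^ m * vmax x"
  proof (rule vmax_leI)
    fix s
    show "x s \<le> B + g ^ m * vmax x"
      using split[of s] residual[of s] Tseq_diff_le[OF mdp, of r sg m vstar s vp]
      unfolding x_def by linarith
  qed
  then have upper: "vmax x * (1 - g ^ m) \<le> B"
    by (simp add: algebra_simps)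
  have "g ^ m * vmin x \<le> vmin x"
  proof (rule vmin_geI)
    fix s
    show "g ^ m * vmin x \<le> x s"
      using split[of s] Tseq_le_optimal[OF mdp vstar, of sg m s] Tseq_diff_ge[OF mdp, of m vstar vp r sg s]
      unfolding x_def by linarith
  qed
  then have "0 \<le> vmin x * (1 - g ^ m)"
    by (simp add: algebra_simps)
  then have nonneg: "0 \<le> x s" for s
    using gm vmin_le[of x s] by (simp add: zero_le_mult_iff)
  have "supnorm x \<le> vmax x"
    unfolding supnorm_def by (rule vmax_leI) (simp add: nonneg)
  also have "\<dots> \<le> B / (1 - g ^ m)"
    using upper gm by (simp add: pos_le_divide_eq)
  finally show ?thesis
    by (simp add: x_def)
qed

text \<open>The run
  is completed by an error-free k-th step w_k = T_{pi_k} v_{k-1}, so that avi_gap_bound applies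
  with n = k, and the comparison sequence starts moving at index k - m.\<close>

lemma periodic_residual_bound:
  assumes mdp: "is_mdp p g" and vstar: "T_opt r p g vstar = vstar"
    and k: "1 \<le> k" and m: "m \<le> k"
    and greedy: "\<And>j. j < k \<Longrightarrow> greedy r p g (pol (Suc j)) (v j)"
    and avi: "\<And>j. Suc j < k \<Longrightarrow> v (Suc j) = (\<lambda>s. T_pol r p g (pol (Suc j)) (v j) s + eps (Suc j) s)"
    and eps_bound: "\<And>j. 1 \<le> j \<Longrightarrow> j < k \<Longrightarrow> span (eps j) \<le> E"
  shows "vstar s - Tseq r p g (periodic_pol pol k m) m vstar s
    \<le> (g - g ^ k) / (1 - g) * E + g ^ k * span (\<lambda>s. vstar s - v 0 s)"
proof -
  define w where "w j = (if j < k then v j else T_pol r p g (pol k) (v (k - 1)))" for j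
  define e where "e j = (\<lambda>s. w j s - T_pol r p g (pol j) (w (j - 1)) s)" for j
  define z where "z j = Tseq r p g (\<lambda>t. pol (j - t)) (j - (k - m)) vstar" for j
  have w_step: "w (Suc j) = (\<lambda>s. T_pol r p g (pol (Suc j)) (w j) s + e (Suc j) s)" for j
    by (simp add: e_def)
  have w_greedy: "greedy r p g (pol (Suc j)) (w j)" if "j < k" for j
    using greedy[OF that] that by (simp add: w_def)
  have z_super: "T_pol r p g (pol (Suc j)) (z j) s \<le> z (Suc j) s" for j s
    unfolding z_def by (rule Tseq_tail_super[OF mdp vstar])
  have z_first: "z 0 = vstar"
    by (simp add: z_def)
  have "k - (k - m) = m"
    using m by simp
  then have z_last: "z k = Tseq r p g (periodic_pol pol k m) m vstar"
    unfolding z_def by (auto simp: periodic_pol_def intro!: Tseq_cong)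
  have e_span: "span (e i) \<le> E" if "1 \<le> i" "i < k" for i
  proof -
    have i: "i = Suc (i - 1)"
      using that(1) by simp
    have "e i = eps i"
      using avi[of "i - 1"] that i by (simp add: e_def w_def)
    then show ?thesis
      using eps_bound[OF that] by simp
  qed
  have e_last: "span (e k) = 0"
    using k by (simp add: e_def w_def span_def)
  have g: "0 \<le> g" "g < 1"
    using mdp by (auto simp: is_mdp_def)
  have gap: "vstar s - z k s \<le> g ^ k * span (\<lambda>s. vstar s - w 0 s) + disc_sum g (\<lambda>i. span (e i)) k"
    using avi_gap_bound[where q=pol and n=k, OF mdp vstar w_greedy w_step z_super z_first] .
  have errors: "disc_sum g (\<lambda>i. span (e i)) k \<le> (g - g ^ k) / (1 - g) * E"
    by (rule disc_sum_le_geometric[OF g k]) (simp_all add: e_last e_span)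
  show ?thesis
    using gap errors z_last k by (simp add: w_def)
qed

theorem theorem2:
  fixes r :: "'s::finite \<Rightarrow> 'a::finite \<Rightarrow> real"
    and p :: "'s \<Rightarrow> 'a \<Rightarrow> 's \<Rightarrow> real"
    and g :: real
    and vstar :: "'s \<Rightarrow> real"
    and v :: "nat \<Rightarrow> 's \<Rightarrow> real"
    and pol :: "nat \<Rightarrow> 's \<Rightarrow> 'a"
    and eps :: "nat \<Rightarrow> 's \<Rightarrow> real"
    and k m :: nat
  assumes mdp: "is_mdp p g"
    and vstar: "T_opt r p g vstar = vstar"
    and k: "1 \<le> k" and m: "1 \<le> m" "m \<le> k"
    and greedy: "\<And>j. j < k \<Longrightarrow> greedy r p g (pol (Suc j)) (v j)"
    and avi: "\<And>j. Suc j < k \<Longrightarrow> v (Suc j) = (\<lambda>s. T_pol r p g (pol (Suc j)) (v j) s + eps (Suc j) s)"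
  shows "supnorm (\<lambda>s. vstar s - value_ns r p g (periodic_pol pol k m) s)
    \<le> 1 / (1 - g ^ m) *
       ((g - g ^ k) / (1 - g) *
          (if k = 1 then 0 else Max {span (eps j) | j. 1 \<le> j \<and> j < k})
        + g ^ k * span (\<lambda>s. vstar s - v 0 s))"
proof -
  define E where "E = (if k = 1 then 0 else Max {span (eps j) | j. 1 \<le> j \<and> j < k})"
  have eps_bound: "span (eps j) \<le> E" if "1 \<le> j" "j < k" for j
  proof -
    have "{span (eps j) | j. 1 \<le> j \<and> j < k} = (\<lambda>j. span (eps j)) ` {1..<k}"
      by auto
    then show ?thesis
      using that by (auto simp: E_def intro!: Max_ge)
  qed
  have gm: "g ^ m < 1"
    using mdp m by (simp add: is_mdp_def power_less_one_iff)
  have "supnorm (\<lambda>s. vstar s - value_ns r p g (periodic_pol pol k m) s)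
      \<le> ((g - g ^ k) / (1 - g) * E + g ^ k * span (\<lambda>s. vstar s - v 0 s)) / (1 - g ^ m)"
    by (rule fixed_point_loss_bound[OF mdp vstar periodic_value_fixed[OF mdp] gm
          periodic_residual_bound[where r=r and pol=pol and v=v and eps=eps,
            OF mdp vstar k m(2) greedy avi eps_bound]])
  then show ?thesis
    by (simp add: E_def)
qed

end
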